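(* Let $E$ and $F$ be topological vector spaces over a valued field $\mathbb{K}$, $f\colon U\to F$ a continuous map on a subset $U\subseteq E$, $D\subseteq U$ a dense subset, and $\sigma>0$. If $f$ is not $C^{0,\sigma}$, then there exist $x_0\in U$ and a gauge $q$ on $F$ such that, for each neighbourhood $V\subseteq U$ of $x_0$ and each gauge $p$ on $E$, there exist $x,y\in V\cap D$ with $q(f(x)-f(y))>p(x-y)^\sigma$.
   Context: A valued field is a field with an absolute value $|.|$ defining a non-discrete topology; vector spaces are Hausdorff. A gauge on a topological $\mathbb{K}$-vector space $E$ is a map $q\colon E\to[0,\infty[$ with $q(tx)=|t|q(x)$ for $t\in\mathbb{K}$, $x\in E$, such that $\{x: q(x)<r\}$ is a $0$-neighbourhood for each $r>0$. A map $g\colon U\to F$ on $U\subseteq E$ is $C^{0,\sigma}$ if for every $x_0\in U$ and gauge $q$ on $F$ there exist a gauge $p$ on $E$ and a neighbourhood $V\subseteq U$ of $x_0$ with $q(g(y)-g(x))\le p(y-x)^\sigma$ for all $x,y\in V$. *)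

theory Defs
  imports "HOL-Analysis.Analysis"
begin

text \<open>A valued field: a field 'k with an absolute value av whose induced topology
  is non-discrete (equivalently, some t has 0 < av t < 1).\<close>
definition valued_field :: "('k::field \<Rightarrow> real) \<Rightarrow> bool" where
  "valued_field av \<longleftrightarrow>
     (\<forall>x. 0 \<le> av x) \<and> (\<forall>x. av x = 0 \<longleftrightarrow> x = 0) \<and>
     (\<forall>x y. av (x * y) = av x * av y) \<and> (\<forall>x y. av (x + y) \<le> av x + av y) \<and>
     (\<exists>t. 0 < av t \<and> av t < 1)"

definition tvs :: "('k::field \<Rightarrow> real) \<Rightarrow> ('k \<Rightarrow> 'e::{ab_group_add,t2_space} \<Rightarrow> 'e) \<Rightarrow> bool" where
  "tvs av sm \<longleftrightarrow>
     (\<forall>x. sm 1 x = x) \<and>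
     (\<forall>a b x. sm (a * b) x = sm a (sm b x)) \<and>
     (\<forall>a b x. sm (a + b) x = sm a x + sm b x) \<and>
     (\<forall>a x y. sm a (x + y) = sm a x + sm a y) \<and>
     continuous_on UNIV (\<lambda>z::'e \<times> 'e. fst z + snd z) \<and>
     (\<forall>t0 x0 W. open W \<and> sm t0 x0 \<in> W \<longrightarrow>
        (\<exists>\<delta>>0. \<exists>N. open N \<and> x0 \<in> N \<and>
           (\<forall>t x. av (t - t0) < \<delta> \<and> x \<in> N \<longrightarrow> sm t x \<in> W)))"

definition gauge_on :: "('k::field \<Rightarrow> real) \<Rightarrow> ('k \<Rightarrow> 'e::{ab_group_add,topological_space} \<Rightarrow> 'e) \<Rightarrow> ('e \<Rightarrow> real) \<Rightarrow> bool" where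
  "gauge_on av sm q \<longleftrightarrow>
     (\<forall>x. 0 \<le> q x) \<and> (\<forall>t x. q (sm t x) = av t * q x) \<and>
     (\<forall>r>0. \<exists>S. open S \<and> 0 \<in> S \<and> S \<subseteq> {x. q x < r})"

definition nbhd_in :: "'e::topological_space set \<Rightarrow> 'e \<Rightarrow> 'e set \<Rightarrow> bool" where
  "nbhd_in U x0 V \<longleftrightarrow> V \<subseteq> U \<and> (\<exists>W. open W \<and> x0 \<in> W \<and> U \<inter> W \<subseteq> V)"

definition C0sigma ::
  "('k::field \<Rightarrow> real) \<Rightarrow> ('k \<Rightarrow> 'e::{ab_group_add,topological_space} \<Rightarrow> 'e)
   \<Rightarrow> ('k \<Rightarrow> 'f::{ab_group_add,topological_space} \<Rightarrow> 'f) \<Rightarrow> 'e set \<Rightarrow> ('e \<Rightarrow> 'f) \<Rightarrow> real \<Rightarrow> bool" where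
  "C0sigma av se sf U g \<sigma> \<longleftrightarrow>
     (\<forall>x0\<in>U. \<forall>q. gauge_on av sf q \<longrightarrow>
        (\<exists>p V. gauge_on av se p \<and> nbhd_in U x0 V \<and>
           (\<forall>x\<in>V. \<forall>y\<in>V. q (g y - g x) \<le> p (y - x) powr \<sigma>)))"

end

theory Submission
  imports Defs
begin

text \<open>Failure of C^{0,\<sigma>} at x0 for the gauge q gives, for every gauge p and every
  neighbourhood V, a violating pair in V; it has to be moved into D. Dominate p by the
  Minkowski functional p' of an open 0-neighbourhood inside {p < 1}, which is upper
  semicontinuous, and q by the Minkowski functional q' of a closed balanced 0-neighbourhood
  inside {q < 1}, which is lower semicontinuous up to a factor \<rho> < 1. Violating the
  estimate for the gauge \<rho> powr (-1/\<sigma>) * p' yields a pair with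
  p'(y - x) powr \<sigma> < \<rho> * q(f y - f x) \<le> \<rho> * q'(f y - f x). This strict
  inequality persists on a neighbourhood of the pair, and continuity of f together with the
  density of D provides such a pair in D.\<close>

definition balanced :: "('k::field \<Rightarrow> real) \<Rightarrow> ('k \<Rightarrow> 'e \<Rightarrow> 'e) \<Rightarrow> 'e set \<Rightarrow> bool" where
  "balanced av sm C \<longleftrightarrow> (\<forall>t x. av t \<le> 1 \<and> x \<in> C \<longrightarrow> sm t x \<in> C)"

definition minkowski_functional ::
  "('k::field \<Rightarrow> real) \<Rightarrow> ('k \<Rightarrow> 'e \<Rightarrow> 'e) \<Rightarrow> 'e set \<Rightarrow> 'e \<Rightarrow> real" where
  "minkowski_functional av sm B v = Inf {av s | s. s \<noteq> 0 \<and> sm (inverse s) v \<in> B}"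

lemma gauge_on_cmult:
  assumes "gauge_on av sm g" and "0 < (K::real)"
  shows "gauge_on av sm (\<lambda>v. K * g v)"
  unfolding gauge_on_def
proof (intro conjI allI impI)
  fix r :: real assume "0 < r"
  then obtain S where "open S" "0 \<in> S" "S \<subseteq> {x. g x < r / K}"
    using assms unfolding gauge_on_def by (meson divide_pos_pos)
  moreover have "{x. g x < r / K} = {x. K * g x < r}"
    using \<open>0 < K\<close> by (auto simp: pos_less_divide_eq mult.commute)
  ultimately show "\<exists>S. open S \<and> 0 \<in> S \<and> S \<subseteq> {x. K * g x < r}" by auto
qed (use assms in \<open>auto simp: gauge_on_def\<close>)

lemma gauge_violation_scaled:
  fixes \<rho> \<sigma> :: real
  assumes "0 < \<rho>" "0 < \<sigma>" "gauge_on av sm p"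
    and bad: "\<And>p. gauge_on av sm p \<Longrightarrow> \<exists>x\<in>X. \<exists>y\<in>X. p (y - x) powr \<sigma> < Q x y"
  shows "\<exists>x\<in>X. \<exists>y\<in>X. p (y - x) powr \<sigma> < \<rho> * Q x y"
proof -
  define K where "K = \<rho> powr (-1 / \<sigma>)"
  have "gauge_on av sm (\<lambda>v. K * p v)"
    using assms(1,3) unfolding K_def by (simp add: gauge_on_cmult)
  then obtain x y where "x \<in> X" "y \<in> X" and "(K * p (y - x)) powr \<sigma> < Q x y"
    using bad by blast
  moreover have "(K * p (y - x)) powr \<sigma> = p (y - x) powr \<sigma> / \<rho>"
    using assms(1-3) unfolding K_def gauge_on_def by (simp add: powr_mult powr_powr powr_neg_one)
  ultimately show ?thesis using \<open>0 < \<rho>\<close> by (auto simp: divide_less_eq mult.commute)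
qed

lemma diff_open_nhds:
  fixes a b :: "'a::{ab_group_add,topological_space}"
  assumes "continuous_on UNIV (\<lambda>z::'a \<times> 'a. fst z - snd z)" and "open W" and "a - b \<in> W"
  obtains A B where "open A" "open B" "a \<in> A" "b \<in> B" "\<And>x y. x \<in> A \<Longrightarrow> y \<in> B \<Longrightarrow> x - y \<in> W"
proof -
  have "open ((\<lambda>z::'a \<times> 'a. fst z - snd z) -` W \<inter> UNIV)"
    using assms(1,2) continuous_on_open_vimage[OF open_UNIV] by blast
  moreover have "(a, b) \<in> (\<lambda>z::'a \<times> 'a. fst z - snd z) -` W \<inter> UNIV" using assms(3) by simp
  ultimately obtain A B where AB: "open A" "open B" "(a, b) \<in> A \<times> B"
      "A \<times> B \<subseteq> (\<lambda>z. fst z - snd z) -` W \<inter> UNIV"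
    by (rule open_prod_elim)
  have diff: "x - y \<in> W" if "x \<in> A" "y \<in> B" for x y
    using that AB(4) by auto
  from AB(3) show ?thesis by (intro that[OF AB(1,2) _ _ diff]) auto
qed

lemma ex_nhd_closure_subset:
  fixes S :: "'a::{ab_group_add,topological_space} set"
  assumes diff: "continuous_on UNIV (\<lambda>z::'a \<times> 'a. fst z - snd z)" and "open S" "0 \<in> S"
  obtains U where "open U" "0 \<in> U" "closure U \<subseteq> S"
proof -
  obtain A B where "open A" "open B" "0 \<in> A" "0 \<in> B" and AB: "\<And>x y. x \<in> A \<Longrightarrow> y \<in> B \<Longrightarrow> x - y \<in> S"
    using diff_open_nhds[OF diff \<open>open S\<close>, of 0 0] \<open>0 \<in> S\<close> by auto
  define U where "U = A \<inter> B"
  have "open U" "0 \<in> U" unfolding U_def using \<open>open A\<close> \<open>open B\<close> \<open>0 \<in> A\<close> \<open>0 \<in> B\<close> by auto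
  have "x \<in> S" if "x \<in> closure U" for x
  proof -
    obtain A' B' where "open A'" "open B'" "x \<in> A'" "x \<in> B'"
      and A'B': "\<And>a b. a \<in> A' \<Longrightarrow> b \<in> B' \<Longrightarrow> a - b \<in> U"
      using diff_open_nhds[OF diff \<open>open U\<close>, of x x] \<open>0 \<in> U\<close> by auto
    have "A' \<inter> B' \<inter> U \<noteq> {}"
      using \<open>x \<in> closure U\<close> \<open>x \<in> A'\<close> \<open>x \<in> B'\<close> \<open>open A'\<close> \<open>open B'\<close>
      by (metis IntI open_Int open_Int_closure_eq_empty empty_iff)
    then obtain y where "y \<in> A'" "y \<in> B'" "y \<in> U" by blast
    then have "y - (y - x) \<in> S" using A'B' \<open>x \<in> B'\<close> AB unfolding U_def by blast
    then show ?thesis by simp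
  qed
  then show ?thesis using that \<open>open U\<close> \<open>0 \<in> U\<close> by blast
qed

lemma dense_pair_nearby:
  fixes f :: "'e::{ab_group_add,topological_space} \<Rightarrow> 'f::{ab_group_add,topological_space}"
  assumes diffE: "continuous_on UNIV (\<lambda>z::'e \<times> 'e. fst z - snd z)"
    and diffF: "continuous_on UNIV (\<lambda>z::'f \<times> 'f. fst z - snd z)"
    and f: "continuous_on U f" and "D \<subseteq> U" "U \<subseteq> closure D"
    and "open W" "x \<in> U \<inter> W" "y \<in> U \<inter> W"
    and "open ME" "y - x \<in> ME" "open MF" "f y - f x \<in> MF"
  shows "\<exists>x'\<in>W \<inter> D. \<exists>y'\<in>W \<inter> D. x' - y' \<in> ME \<and> f x' - f y' \<in> MF"
proof -
  obtain A1 B1 where "open A1" "open B1" "f y \<in> A1" "f x \<in> B1"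
    and AB1: "\<And>u v. u \<in> A1 \<Longrightarrow> v \<in> B1 \<Longrightarrow> u - v \<in> MF"
    using diff_open_nhds[OF diffF \<open>open MF\<close> \<open>f y - f x \<in> MF\<close>] by blast
  obtain A2 B2 where "open A2" "open B2" "y \<in> A2" "x \<in> B2"
    and AB2: "\<And>u v. u \<in> A2 \<Longrightarrow> v \<in> B2 \<Longrightarrow> u - v \<in> ME"
    using diff_open_nhds[OF diffE \<open>open ME\<close> \<open>y - x \<in> ME\<close>] by blast
  have "\<forall>B. open B \<longrightarrow> (\<exists>G. open G \<and> G \<inter> U = f -` B \<inter> U)"
    using f continuous_on_open_invariant by blast
  then obtain G1 G2 where "open G1" "G1 \<inter> U = f -` A1 \<inter> U" "open G2" "G2 \<inter> U = f -` B1 \<inter> U"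
    using \<open>open A1\<close> \<open>open B1\<close> by meson
  have meets_D: "\<exists>z'. z' \<in> X \<inter> D" if "open X" "z \<in> X" "z \<in> U" for X z
    using that \<open>U \<subseteq> closure D\<close> open_Int_closure_eq_empty[of X D] by blast
  have "y \<in> G1" "x \<in> G2"
    using \<open>G1 \<inter> U = f -` A1 \<inter> U\<close> \<open>G2 \<inter> U = f -` B1 \<inter> U\<close> \<open>f y \<in> A1\<close> \<open>f x \<in> B1\<close>
      \<open>x \<in> U \<inter> W\<close> \<open>y \<in> U \<inter> W\<close> by blast+
  then have "open (G1 \<inter> A2 \<inter> W)" "y \<in> G1 \<inter> A2 \<inter> W" "open (G2 \<inter> B2 \<inter> W)" "x \<in> G2 \<inter> B2 \<inter> W"
    using \<open>open G1\<close> \<open>open G2\<close> \<open>open A2\<close> \<open>open B2\<close> \<open>open W\<close> \<open>y \<in> A2\<close> \<open>x \<in> B2\<close>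
      \<open>x \<in> U \<inter> W\<close> \<open>y \<in> U \<inter> W\<close> by auto
  then obtain x' y' where x': "x' \<in> G1 \<inter> A2 \<inter> W \<inter> D" and y': "y' \<in> G2 \<inter> B2 \<inter> W \<inter> D"
    using meets_D \<open>x \<in> U \<inter> W\<close> \<open>y \<in> U \<inter> W\<close> by (meson IntD1)
  have "f x' \<in> A1" "f y' \<in> B1"
    using x' y' \<open>D \<subseteq> U\<close> \<open>G1 \<inter> U = f -` A1 \<inter> U\<close> \<open>G2 \<inter> U = f -` B1 \<inter> U\<close> by blast+
  moreover have "x' - y' \<in> ME" using x' y' AB2 by blast
  ultimately show ?thesis using x' y' AB1 by blast
qed

lemma dense_pair_strict_gap:
  fixes f :: "'e::{ab_group_add,topological_space} \<Rightarrow> 'f::{ab_group_add,topological_space}"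
  assumes diffE: "continuous_on UNIV (\<lambda>z::'e \<times> 'e. fst z - snd z)"
    and diffF: "continuous_on UNIV (\<lambda>z::'f \<times> 'f. fst z - snd z)"
    and f: "continuous_on U f" "D \<subseteq> U" "U \<subseteq> closure D"
    and W: "open W" "x \<in> U \<inter> W" "y \<in> U \<inter> W"
    and "0 < (\<sigma>::real)" and P_nonneg: "\<And>v. 0 \<le> P v"
    and P_usc: "\<And>v e. P v < e \<Longrightarrow> \<exists>M. open M \<and> v \<in> M \<and> (\<forall>w\<in>M. P w < e)"
    and Q_lsc: "\<exists>M. open M \<and> f y - f x \<in> M \<and> (\<forall>w\<in>M. c \<le> Q w)"
    and gap: "P (y - x) powr \<sigma> < c"
  shows "\<exists>x'\<in>W \<inter> D. \<exists>y'\<in>W \<inter> D. P (x' - y') powr \<sigma> < Q (f x' - f y')"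
proof -
  define e where "e = c powr (1 / \<sigma>)"
  have "0 < c" using gap powr_ge_zero[of "P (y - x)" \<sigma>] by linarith
  then have e_powr: "e powr \<sigma> = c" unfolding e_def using \<open>0 < \<sigma>\<close> by (simp add: powr_powr)
  have "P (y - x) < e"
  proof (rule ccontr)
    assume "\<not> P (y - x) < e"
    then have "e powr \<sigma> \<le> P (y - x) powr \<sigma>"
      using \<open>0 < \<sigma>\<close> by (intro powr_mono2) (auto simp: e_def)
    with gap e_powr show False by simp
  qed
  then obtain ME where ME: "open ME" "y - x \<in> ME" "\<forall>w\<in>ME. P w < e" using P_usc by blast
  obtain MF where MF: "open MF" "f y - f x \<in> MF" "\<forall>w\<in>MF. c \<le> Q w" using Q_lsc by blast
  obtain x' y' where "x' \<in> W \<inter> D" "y' \<in> W \<inter> D" "x' - y' \<in> ME" "f x' - f y' \<in> MF"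
    using dense_pair_nearby[OF diffE diffF f W ME(1,2) MF(1,2)] by blast
  have "P (x' - y') powr \<sigma> < e powr \<sigma>"
    using \<open>x' - y' \<in> ME\<close> ME(3) P_nonneg \<open>0 < \<sigma>\<close> by (intro powr_less_mono2) auto
  also have "\<dots> \<le> Q (f x' - f y')" using \<open>f x' - f y' \<in> MF\<close> MF(3) e_powr by simp
  finally show ?thesis using \<open>x' \<in> W \<inter> D\<close> \<open>y' \<in> W \<inter> D\<close> by blast
qed

locale abs_valued_field =
  fixes av :: "'k::field \<Rightarrow> real"
  assumes valued_field: "valued_field av"
begin

lemma av_nonneg: "0 \<le> av x"
  using valued_field unfolding valued_field_def by blast

lemma av_eq_0_iff [simp]: "av x = 0 \<longleftrightarrow> x = 0"
  using valued_field unfolding valued_field_def by blast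

lemma av_mult: "av (x * y) = av x * av y"
  using valued_field unfolding valued_field_def by blast

lemma av_0 [simp]: "av 0 = 0"
  by simp

lemma av_pos: "x \<noteq> 0 \<Longrightarrow> 0 < av x"
  using av_nonneg[of x] by (simp add: order_less_le)

lemma av_1 [simp]: "av 1 = 1"
  using av_mult[of 1 1] by simp

lemma av_inverse: "av (inverse x) = inverse (av x)"
proof (cases "x = 0")
  case False
  then have "av x * av (inverse x) = 1" using av_mult[of x "inverse x"] by simp
  then show ?thesis by (rule inverse_unique[symmetric])
qed simp

lemma av_power: "av (x ^ n) = av x ^ n"
  by (induction n) (simp_all add: av_mult)

lemma ex_av_between_0_1: "\<exists>t. 0 < av t \<and> av t < 1"
  using valued_field unfolding valued_field_def by blast

lemma ex_av_less:
  assumes "0 < d" shows "\<exists>s. s \<noteq> 0 \<and> av s < d"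
proof -
  obtain t where t: "0 < av t" "av t < 1" using ex_av_between_0_1 by blast
  obtain n where "av t ^ n < d" using real_arch_pow_inv[OF assms t(2)] by blast
  with t show ?thesis by (intro exI[of _ "t ^ n"]) (auto simp: av_power)
qed

lemma ex_av_gap: "\<exists>\<rho>. 0 < \<rho> \<and> \<rho> < 1 \<and> (\<forall>m>0. \<exists>s. \<rho> * m \<le> av s \<and> av s < m)"
proof -
  obtain t where t: "0 < av t" "av t < 1" using ex_av_between_0_1 by blast
  have "\<exists>s. av t * m \<le> av s \<and> av s < m" if "0 < m" for m
  proof -
    obtain n where n: "m < inverse (av t) ^ n"
      using real_arch_pow[of "inverse (av t)" m] t by (auto simp: one_less_inverse)
    define u where "u = inverse t ^ n"
    have u: "av u = inverse (av t) ^ n" by (simp add: u_def av_power av_inverse)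
    then have "0 < m / av u" using \<open>0 < m\<close> t(1) by simp
    then obtain k where "av t ^ k < m / av u" using real_arch_pow_inv t(2) by blast
    then have "\<exists>k. av u * av t ^ k < m" using u t(1) by (auto simp: pos_less_divide_eq mult.commute)
    then obtain k where k: "av u * av t ^ k < m" "\<And>j. j < k \<Longrightarrow> \<not> av u * av t ^ j < m"
      using exists_least_iff[of "\<lambda>k. av u * av t ^ k < m"] by blast
    have "k \<noteq> 0"
    proof
      assume "k = 0"
      then have "av u < m" using k(1) by simp
      with u n show False by simp
    qed
    then obtain j where "k = Suc j" using not0_implies_Suc by blast
    then have "av t * m \<le> av u * av t ^ k" using k(2)[of j] t(1) by (simp add: field_simps)
    with k(1) show ?thesis by (intro exI[of _ "u * t ^ k"]) (simp add: av_mult av_power)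
  qed
  with t show ?thesis by blast
qed

end

locale valued_tvs = abs_valued_field +
  fixes sm :: "'k::field \<Rightarrow> 'e::{ab_group_add,t2_space} \<Rightarrow> 'e"
  assumes tvs: "tvs av sm"
begin

lemmas tvs_unfolded = tvs[unfolded tvs_def]

lemma sm_1 [simp]: "sm 1 x = x"
  using tvs_unfolded by (elim conjE) simp

lemma sm_mult: "sm (a * b) x = sm a (sm b x)"
  using tvs_unfolded by (elim conjE) simp

lemma sm_add_left: "sm (a + b) x = sm a x + sm b x"
  using tvs_unfolded by (elim conjE) simp

lemma continuous_add: "continuous_on UNIV (\<lambda>z::'e \<times> 'e. fst z + snd z)"
  using tvs_unfolded by (elim conjE)

lemma sm_continuous:
  assumes "open W" "sm t0 x0 \<in> W"
  obtains \<delta> N where "0 < \<delta>" "open N" "x0 \<in> N" "\<And>t x. av (t - t0) < \<delta> \<Longrightarrow> x \<in> N \<Longrightarrow> sm t x \<in> W"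
proof -
  have "\<forall>t0 x0 W. open W \<and> sm t0 x0 \<in> W \<longrightarrow>
      (\<exists>\<delta>>0. \<exists>N. open N \<and> x0 \<in> N \<and> (\<forall>t x. av (t - t0) < \<delta> \<and> x \<in> N \<longrightarrow> sm t x \<in> W))"
    using tvs_unfolded by (elim conjE)
  from this[rule_format, OF conjI[OF assms]] obtain \<delta> N where
    "0 < \<delta>" "open N" "x0 \<in> N" "\<forall>t x. av (t - t0) < \<delta> \<and> x \<in> N \<longrightarrow> sm t x \<in> W"
    by blast
  then show ?thesis by (intro that[of \<delta> N]) auto
qed

lemma sm_0_left [simp]: "sm 0 x = 0"
  using sm_add_left[of 0 0 x] by simp

lemma sm_0_right [simp]: "sm t 0 = 0"
  using sm_mult[of t 0 0] by simp

lemma sm_minus_1: "sm (-1) x = - x"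
  using sm_add_left[of 1 "-1" x] by (simp add: eq_neg_iff_add_eq_0 add.commute)

lemma sm_inverse_cancel: "s \<noteq> 0 \<Longrightarrow> sm s (sm (inverse s) v) = v"
  using sm_mult[of s "inverse s" v] by simp

lemma open_sm_vimage:
  assumes "open W" shows "open {x. sm c x \<in> W}"
proof (rule Topological_Spaces.openI)
  fix x assume "x \<in> {x. sm c x \<in> W}"
  then have "sm c x \<in> W" by simp
  then obtain \<delta> N where "0 < \<delta>" "open N" "x \<in> N"
    and N: "\<And>t y. av (t - c) < \<delta> \<Longrightarrow> y \<in> N \<Longrightarrow> sm t y \<in> W"
    using sm_continuous[OF assms] by metis
  have "N \<subseteq> {x. sm c x \<in> W}" using N \<open>0 < \<delta>\<close> by auto
  with \<open>open N\<close> \<open>x \<in> N\<close> show "\<exists>N. open N \<and> x \<in> N \<and> N \<subseteq> {x. sm c x \<in> W}" by blast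
qed

lemma closed_sm_vimage:
  assumes "closed K" shows "closed {x. sm c x \<in> K}"
proof -
  have "{x. sm c x \<in> K} = - {x. sm c x \<in> - K}" by auto
  then show ?thesis using open_sm_vimage[of "- K" c] assms by (simp add: closed_def)
qed

lemma continuous_diff: "continuous_on UNIV (\<lambda>z::'e \<times> 'e. fst z - snd z)"
proof -
  have neg: "continuous_on UNIV (sm (-1))"
    unfolding continuous_on_open_vimage[OF open_UNIV] by (auto simp: vimage_def intro: open_sm_vimage)
  have pair: "continuous_on UNIV (\<lambda>z::'e \<times> 'e. (fst z, sm (-1) (snd z)))"
    by (intro continuous_on_Pair continuous_on_fst continuous_on_id
        continuous_on_compose2[OF neg, of UNIV snd] continuous_on_snd) auto
  show ?thesis
    using continuous_on_compose2[OF continuous_add pair] by (simp add: sm_minus_1)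
qed

lemma absorbing:
  assumes "open N" "0 \<in> N" obtains s where "s \<noteq> 0" "sm (inverse s) v \<in> N"
proof -
  have "sm 0 v \<in> N" using assms(2) by simp
  then obtain \<delta> M where "0 < \<delta>" "v \<in> M" and M: "\<And>t x. av (t - 0) < \<delta> \<Longrightarrow> x \<in> M \<Longrightarrow> sm t x \<in> N"
    using sm_continuous[OF assms(1)] by metis
  obtain t where "t \<noteq> 0" "av t < \<delta>" using ex_av_less[OF \<open>0 < \<delta>\<close>] by blast
  with M[of t v] \<open>v \<in> M\<close> show ?thesis by (intro that[of "inverse t"]) auto
qed

lemma ex_closed_balanced_nhd:
  assumes "open S" "0 \<in> S"
  obtains C N where "closed C" "balanced av sm C" "open N" "0 \<in> N" "N \<subseteq> C" "C \<subseteq> S"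
proof -
  obtain U where "open U" "0 \<in> U" "closure U \<subseteq> S"
    using ex_nhd_closure_subset[OF continuous_diff assms] by blast
  define C where "C = (\<Inter>t\<in>{t. av t \<le> 1}. {v. sm t v \<in> closure U})"
  have "closed C" unfolding C_def by (intro closed_INT ballI closed_sm_vimage) simp
  have "balanced av sm C"
    unfolding balanced_def C_def
    by (auto simp: av_mult av_nonneg mult_le_one sm_mult[symmetric])
  have "C \<subseteq> S"
  proof
    fix v assume "v \<in> C"
    then have "v \<in> closure U" unfolding C_def by (force dest: spec[of _ 1])
    with \<open>closure U \<subseteq> S\<close> show "v \<in> S" by auto
  qed
  have "sm 0 0 \<in> U" using \<open>0 \<in> U\<close> by simp
  then obtain \<delta> N0 where "0 < \<delta>" "open N0" "0 \<in> N0"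
    and N0: "\<And>t x. av (t - 0) < \<delta> \<Longrightarrow> x \<in> N0 \<Longrightarrow> sm t x \<in> U"
    using sm_continuous[OF \<open>open U\<close>] by metis
  obtain c where "c \<noteq> 0" "av c < \<delta>" using ex_av_less[OF \<open>0 < \<delta>\<close>] by blast
  define N where "N = {x. sm (inverse c) x \<in> N0}"
  have "open N" "0 \<in> N" unfolding N_def using open_sm_vimage \<open>open N0\<close> \<open>0 \<in> N0\<close> by auto
  have "sm t x \<in> U" if "x \<in> N" "av t \<le> 1" for t x
  proof -
    have "av (t * c) < \<delta>"
      using mult_left_le_one_le[OF av_nonneg[of c] av_nonneg[of t] that(2)] \<open>av c < \<delta>\<close>
      by (simp add: av_mult)
    then have "sm (t * c) (sm (inverse c) x) \<in> U" using N0 that(1) unfolding N_def by simp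
    moreover have "t * c * inverse c = t" using \<open>c \<noteq> 0\<close> by simp
    ultimately show ?thesis by (simp flip: sm_mult)
  qed
  then have "N \<subseteq> C" unfolding C_def using closure_subset by blast
  show ?thesis by (rule that) fact+
qed

abbreviation mink :: "'e set \<Rightarrow> 'e \<Rightarrow> real" where
  "mink \<equiv> minkowski_functional av sm"

context
  fixes B N :: "'e set"
  assumes N: "open N" "0 \<in> N" "N \<subseteq> B"
begin

lemma minkowski_set_nonempty: "{av s |s. s \<noteq> 0 \<and> sm (inverse s) v \<in> B} \<noteq> {}"
proof -
  obtain s where "s \<noteq> 0" "sm (inverse s) v \<in> N" by (rule absorbing[OF N(1,2)])
  with N(3) show ?thesis by blast
qed

lemma minkowski_le: "s \<noteq> 0 \<Longrightarrow> sm (inverse s) v \<in> B \<Longrightarrow> mink B v \<le> av s"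
  unfolding minkowski_functional_def
  by (rule cInf_lower) (auto intro!: bdd_belowI[of _ 0] simp: av_nonneg)

lemma minkowski_greatest:
  "(\<And>s. s \<noteq> 0 \<Longrightarrow> sm (inverse s) v \<in> B \<Longrightarrow> c \<le> av s) \<Longrightarrow> c \<le> mink B v"
  unfolding minkowski_functional_def by (rule cInf_greatest[OF minkowski_set_nonempty]) blast

lemma minkowski_nonneg: "0 \<le> mink B v"
  by (rule minkowski_greatest) (rule av_nonneg)

lemma minkowski_less_imp:
  "mink B v < e \<Longrightarrow> \<exists>s. s \<noteq> 0 \<and> sm (inverse s) v \<in> B \<and> av s < e"
  unfolding minkowski_functional_def using cInf_lessD[OF minkowski_set_nonempty] by blast

lemma minkowski_0: "mink B 0 = 0"
proof -
  have "mink B 0 \<le> e" if "0 < e" for e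
  proof -
    obtain s where "s \<noteq> 0" "av s < e" using ex_av_less[OF \<open>0 < e\<close>] by blast
    moreover have "sm (inverse s) 0 \<in> B" using N(2,3) by auto
    ultimately show ?thesis using minkowski_le[of s 0] by simp
  qed
  then have "mink B 0 \<le> 0" by (rule dense_ge)
  with minkowski_nonneg show ?thesis by (rule antisym[rotated])
qed

lemma minkowski_sm_le:
  assumes "t \<noteq> 0" shows "mink B (sm t v) \<le> av t * mink B v"
proof -
  have "mink B (sm t v) / av t \<le> mink B v"
  proof (rule minkowski_greatest)
    fix s assume "s \<noteq> 0" "sm (inverse s) v \<in> B"
    moreover have "inverse (t * s) * t = inverse s" using assms \<open>s \<noteq> 0\<close> by (simp add: field_simps)
    ultimately have "sm (inverse (t * s)) (sm t v) \<in> B" by (metis sm_mult)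
    then have "mink B (sm t v) \<le> av (t * s)" using assms \<open>s \<noteq> 0\<close> by (intro minkowski_le) simp_all
    then show "mink B (sm t v) / av t \<le> av s"
      using av_pos[OF assms] by (simp add: av_mult pos_divide_le_eq mult.commute)
  qed
  then show ?thesis using av_pos[OF assms] by (simp add: pos_divide_le_eq mult.commute)
qed

lemma minkowski_sm: "mink B (sm t v) = av t * mink B v"
proof (cases "t = 0")
  case False
  have "mink B v = mink B (sm (inverse t) (sm t v))"
    using False by (simp flip: sm_mult)
  also have "\<dots> \<le> inverse (av t) * mink B (sm t v)"
    using False minkowski_sm_le[of "inverse t"] by (simp add: av_inverse)
  finally have "av t * mink B v \<le> mink B (sm t v)"
    using av_pos[OF False] by (simp add: field_simps)
  with minkowski_sm_le[OF False, of v] show ?thesis by simp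
qed (simp add: minkowski_0)

lemma gauge_on_minkowski: "gauge_on av sm (mink B)"
  unfolding gauge_on_def
proof (intro conjI allI impI minkowski_nonneg minkowski_sm)
  fix r :: real assume "0 < r"
  then obtain s where s: "s \<noteq> 0" "av s < r" using ex_av_less by blast
  let ?S = "{x. sm (inverse s) x \<in> N}"
  have "?S \<subseteq> {x. mink B x < r}"
    using minkowski_le[OF s(1)] s(2) N(3) by fastforce
  moreover have "open ?S" "0 \<in> ?S" using open_sm_vimage N(1,2) by auto
  ultimately show "\<exists>S. open S \<and> 0 \<in> S \<and> S \<subseteq> {x. mink B x < r}" by blast
qed

lemma le_minkowski:
  assumes "gauge_on av sm g" "B \<subseteq> {x. g x < 1}"
  shows "g v \<le> mink B v"
proof (rule minkowski_greatest)
  fix s assume s: "s \<noteq> 0" "sm (inverse s) v \<in> B"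
  have "g v = g (sm s (sm (inverse s) v))" using sm_inverse_cancel[OF s(1)] by simp
  also have "\<dots> = av s * g (sm (inverse s) v)" using assms(1) unfolding gauge_on_def by blast
  also have "\<dots> \<le> av s"
    using s(2) assms(2) by (intro mult_left_le av_nonneg) auto
  finally show "g v \<le> av s" .
qed

lemma minkowski_upper_semicontinuous:
  assumes "open B" "mink B v < e"
  shows "\<exists>M. open M \<and> v \<in> M \<and> (\<forall>w\<in>M. mink B w < e)"
proof -
  obtain s where s: "s \<noteq> 0" "sm (inverse s) v \<in> B" "av s < e"
    using minkowski_less_imp[OF assms(2)] by blast
  have "\<forall>w\<in>{w. sm (inverse s) w \<in> B}. mink B w < e"
    using minkowski_le[OF s(1)] s(3) by fastforce
  then show ?thesis using open_sm_vimage[OF assms(1)] s(2) by blast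
qed

text \<open>Balancedness makes the sets {w. sm (inverse s) w \<notin> B} witness av s \<le> mink B w.\<close>
lemma minkowski_lower_semicontinuous:
  assumes "closed B" "balanced av sm B" "av s < mink B v"
  shows "\<exists>M. open M \<and> v \<in> M \<and> (\<forall>w\<in>M. av s \<le> mink B w)"
proof (cases "s = 0")
  case True
  then show ?thesis using minkowski_nonneg by auto
next
  case False
  let ?M = "{w. sm (inverse s) w \<in> - B}"
  have "open ?M" using assms(1) by (intro open_sm_vimage) (simp add: open_Compl)
  moreover have "v \<in> ?M" using minkowski_le[OF False, of v] assms(3) by fastforce
  moreover have "av s \<le> mink B w" if "w \<in> ?M" for w
  proof (rule minkowski_greatest)
    fix s' assume s': "s' \<noteq> 0" "sm (inverse s') w \<in> B"
    show "av s \<le> av s'"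
    proof (rule ccontr)
      assume "\<not> av s \<le> av s'"
      moreover have "av (inverse s * s') = av s' / av s"
        by (simp only: av_mult av_inverse) (simp add: divide_inverse mult.commute)
      ultimately have "av (inverse s * s') \<le> 1" using av_pos[OF False] by simp
      then have "sm (inverse s * s') (sm (inverse s') w) \<in> B"
        using assms(2) s'(2) unfolding balanced_def by blast
      moreover have "inverse s * s' * inverse s' = inverse s" using s'(1) by simp
      ultimately have "sm (inverse s) w \<in> B" by (metis sm_mult)
      with that show False by simp
    qed
  qed
  ultimately show ?thesis by blast
qed

end

lemma ex_usc_gauge_above:
  assumes "gauge_on av sm p"
  obtains p' where "gauge_on av sm p'" "\<And>v. p v \<le> p' v"
    "\<And>v e. p' v < e \<Longrightarrow> \<exists>M. open M \<and> v \<in> M \<and> (\<forall>w\<in>M. p' w < e)"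
proof -
  obtain S where S: "open S" "0 \<in> S" "S \<subseteq> {x. p x < 1}"
    using assms unfolding gauge_on_def by (meson zero_less_one)
  show ?thesis
    using gauge_on_minkowski[OF S(1,2) order_refl] le_minkowski[OF S(1,2) order_refl assms S(3)]
      minkowski_upper_semicontinuous[OF S(1,2) order_refl S(1)]
    by (rule that)
qed

text \<open>As the values of av may form a discrete set, q' is only lower semicontinuous up to
  the factor \<rho> bounding their relative gaps.\<close>
lemma ex_lsc_gauge_above:
  assumes "gauge_on av sm q"
  obtains \<rho> q' where "0 < \<rho>" "gauge_on av sm q'" "\<And>v. q v \<le> q' v"
    "\<And>v. \<exists>M. open M \<and> v \<in> M \<and> (\<forall>w\<in>M. \<rho> * q' v \<le> q' w)"
proof -
  obtain \<rho> where "0 < \<rho>" and \<rho>: "\<And>m. 0 < m \<Longrightarrow> \<exists>s. \<rho> * m \<le> av s \<and> av s < m"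
    using ex_av_gap by blast
  obtain S where S: "open S" "0 \<in> S" "S \<subseteq> {x. q x < 1}"
    using assms unfolding gauge_on_def by (meson zero_less_one)
  obtain C N where C: "closed C" "balanced av sm C" and N: "open N" "0 \<in> N" "N \<subseteq> C"
    and "C \<subseteq> S"
    by (rule ex_closed_balanced_nhd[OF S(1,2)])
  with S(3) have "C \<subseteq> {x. q x < 1}" by blast
  have "\<exists>M. open M \<and> v \<in> M \<and> (\<forall>w\<in>M. \<rho> * mink C v \<le> mink C w)" for v
  proof (cases "mink C v = 0")
    case True
    then show ?thesis using minkowski_nonneg[OF N] by auto
  next
    case False
    then have "0 < mink C v" using minkowski_nonneg[OF N, of v] by simp
    then obtain s where s: "\<rho> * mink C v \<le> av s" "av s < mink C v" using \<rho> by blast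
    obtain M where "open M" "v \<in> M" and M: "\<forall>w\<in>M. av s \<le> mink C w"
      using minkowski_lower_semicontinuous[OF N C s(2)] by blast
    moreover have "\<forall>w\<in>M. \<rho> * mink C v \<le> mink C w" using M s(1) by force
    ultimately show ?thesis by blast
  qed
  then show ?thesis
    by (rule that[OF \<open>0 < \<rho>\<close> gauge_on_minkowski[OF N] le_minkowski[OF N assms \<open>C \<subseteq> {x. q x < 1}\<close>]])
qed

end

lemma violation_on_dense_subset:
  fixes av :: "'k::field \<Rightarrow> real"
    and se :: "'k \<Rightarrow> 'e::{ab_group_add,t2_space} \<Rightarrow> 'e"
    and sf :: "'k \<Rightarrow> 'f::{ab_group_add,t2_space} \<Rightarrow> 'f" and f :: "'e \<Rightarrow> 'f"
  assumes "valued_tvs av se" "valued_tvs av sf"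
    and f: "continuous_on U f" "D \<subseteq> U" "U \<subseteq> closure D"
    and "0 < \<sigma>" "open W" "gauge_on av se p" "0 < \<rho>"
    and q_le: "\<And>v. q v \<le> q' v"
    and q'_lsc: "\<And>v. \<exists>M. open M \<and> v \<in> M \<and> (\<forall>w\<in>M. \<rho> * q' v \<le> q' w)"
    and bad: "\<And>p. gauge_on av se p \<Longrightarrow> \<exists>x\<in>U \<inter> W. \<exists>y\<in>U \<inter> W. p (y - x) powr \<sigma> < q (f y - f x)"
  shows "\<exists>x\<in>W \<inter> D. \<exists>y\<in>W \<inter> D. p (x - y) powr \<sigma> < q' (f x - f y)"
proof -
  interpret E: valued_tvs av se by fact
  interpret F: valued_tvs av sf by fact
  obtain p' where "gauge_on av se p'" and p_le: "\<And>v. p v \<le> p' v"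
    and p'_usc: "\<And>v e. p' v < e \<Longrightarrow> \<exists>M. open M \<and> v \<in> M \<and> (\<forall>w\<in>M. p' w < e)"
    using E.ex_usc_gauge_above[OF \<open>gauge_on av se p\<close>] by metis
  have p'_nonneg: "\<And>v. 0 \<le> p' v" using \<open>gauge_on av se p'\<close> unfolding gauge_on_def by blast
  obtain x y where xy: "x \<in> U \<inter> W" "y \<in> U \<inter> W" and "p' (y - x) powr \<sigma> < \<rho> * q (f y - f x)"
    using gauge_violation_scaled[OF \<open>0 < \<rho>\<close> \<open>0 < \<sigma>\<close> \<open>gauge_on av se p'\<close> bad] by blast
  moreover have "\<rho> * q (f y - f x) \<le> \<rho> * q' (f y - f x)" using q_le \<open>0 < \<rho>\<close> by simp
  ultimately obtain x' y' where "x' \<in> W \<inter> D" "y' \<in> W \<inter> D"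
    and "p' (x' - y') powr \<sigma> < q' (f x' - f y')"
    using dense_pair_strict_gap[OF E.continuous_diff F.continuous_diff f \<open>open W\<close> xy \<open>0 < \<sigma>\<close>
        p'_nonneg p'_usc q'_lsc[of "f y - f x"]] by (meson less_le_trans)
  moreover have "p (x' - y') powr \<sigma> \<le> p' (x' - y') powr \<sigma>"
    using \<open>gauge_on av se p\<close> \<open>0 < \<sigma>\<close> p_le unfolding gauge_on_def by (intro powr_mono2) auto
  ultimately show ?thesis by (meson le_less_trans)
qed

theorem lemma1p28:
  fixes av :: "'k::field \<Rightarrow> real"
    and se :: "'k \<Rightarrow> 'e::{ab_group_add,t2_space} \<Rightarrow> 'e"
    and sf :: "'k \<Rightarrow> 'f::{ab_group_add,t2_space} \<Rightarrow> 'f"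
    and U D :: "'e set" and f :: "'e \<Rightarrow> 'f" and \<sigma> :: real
  assumes "valued_field av" and "tvs av se" and "tvs av sf"
    and "continuous_on U f"
    and "D \<subseteq> U" and "U \<subseteq> closure D"
    and "\<sigma> > 0"
    and "\<not> C0sigma av se sf U f \<sigma>"
  shows "\<exists>x0\<in>U. \<exists>q. gauge_on av sf q \<and>
           (\<forall>V p. nbhd_in U x0 V \<and> gauge_on av se p \<longrightarrow>
              (\<exists>x\<in>V \<inter> D. \<exists>y\<in>V \<inter> D. q (f x - f y) > p (x - y) powr \<sigma>))"
proof -
  have E: "valued_tvs av se" and F: "valued_tvs av sf" using assms(1-3) by unfold_locales
  obtain x0 q where "x0 \<in> U" "gauge_on av sf q" and bad: "\<And>p V. gauge_on av se p \<Longrightarrow>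
      nbhd_in U x0 V \<Longrightarrow> \<exists>x\<in>V. \<exists>y\<in>V. p (y - x) powr \<sigma> < q (f y - f x)"
    using assms(8) unfolding C0sigma_def not_le[symmetric] by blast
  obtain \<rho> q' where "0 < \<rho>" "gauge_on av sf q'" "\<And>v. q v \<le> q' v"
    and q'_lsc: "\<And>v. \<exists>M. open M \<and> v \<in> M \<and> (\<forall>w\<in>M. \<rho> * q' v \<le> q' w)"
    using valued_tvs.ex_lsc_gauge_above[OF F \<open>gauge_on av sf q\<close>] by metis
  have "\<exists>x\<in>V \<inter> D. \<exists>y\<in>V \<inter> D. p (x - y) powr \<sigma> < q' (f x - f y)"
    if V: "nbhd_in U x0 V" and p: "gauge_on av se p" for V p
  proof -
    obtain W where "open W" "x0 \<in> W" "U \<inter> W \<subseteq> V" using V unfolding nbhd_in_def by blast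
    then have "nbhd_in U x0 (U \<inter> W)" unfolding nbhd_in_def by blast
    then have "\<exists>x\<in>W \<inter> D. \<exists>y\<in>W \<inter> D. p (x - y) powr \<sigma> < q' (f x - f y)"
      using violation_on_dense_subset[OF E F assms(4-7) \<open>open W\<close> p \<open>0 < \<rho>\<close>] bad
        \<open>\<And>v. q v \<le> q' v\<close> q'_lsc by blast
    then show ?thesis using \<open>U \<inter> W \<subseteq> V\<close> \<open>D \<subseteq> U\<close> by blast
  qed
  then show ?thesis using \<open>x0 \<in> U\<close> \<open>gauge_on av sf q'\<close> by blast
qed

end
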